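(* Let $\mathfrak{n}$ be the real $7$-dimensional Lie algebra with basis $e_1,\dots,e_7$ whose nonzero brackets (up to antisymmetry) are $[e_1,e_2]=e_3$, $[e_1,e_3]=e_4$, $[e_1,e_4]=e_6$, $[e_2,e_3]=e_5$, $[e_2,e_5]=-e_7$, $[e_2,e_6]=-e_7$, $[e_3,e_4]=e_7$. Then $\mathfrak{n}$ is an Einstein nilradical.
   Context: A real nilpotent Lie algebra $\mathfrak{n}$ is called an Einstein nilradical if it admits an inner product such that the left-invariant Riemannian metric it defines on the simply connected nilpotent Lie group with Lie algebra $\mathfrak{n}$ is a nilsoliton, i.e. its Ricci operator satisfies $\mathrm{Ric}=c\,\mathrm{Id}+D$ for some $c\in\mathbb{R}$ and some derivation $D$ of $\mathfrak{n}$. Brackets of basis elements not listed are zero. *)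

theory Defs
  imports "HOL-Analysis.Analysis"
begin

definition lie_bracket :: "(real^'n \<Rightarrow> real^'n \<Rightarrow> real^'n) \<Rightarrow> bool" where
  "lie_bracket br \<longleftrightarrow> (\<forall>x. linear (br x)) \<and> (\<forall>y. linear (\<lambda>x. br x y))
     \<and> (\<forall>x. br x x = 0)
     \<and> (\<forall>x y z. br x (br y z) + br y (br z x) + br z (br x y) = 0)"

text \<open>Nilpotent: some iterated bracket [x_1,[x_2,...,[x_k,y]...]] of fixed length vanishes
  identically (equivalently, the lower central series reaches 0).\<close>
definition nilpotent_bracket :: "(real^'n \<Rightarrow> real^'n \<Rightarrow> real^'n) \<Rightarrow> bool" where
  "nilpotent_bracket br \<longleftrightarrow>
     (\<exists>k. \<forall>xs y. length xs = k \<longrightarrow> foldr (\<lambda>x v. br x v) xs y = 0)"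

definition derivation :: "(real^'n \<Rightarrow> real^'n \<Rightarrow> real^'n) \<Rightarrow> (real^'n \<Rightarrow> real^'n) \<Rightarrow> bool" where
  "derivation br D \<longleftrightarrow> linear D \<and> (\<forall>x y. D (br x y) = br (D x) y + br x (D y))"

text \<open>Inner products on real^'n are represented by their Gram matrix G:
  <x,y>_G = x \<bullet> (G *v y), with G symmetric positive definite.\<close>
definition inner_product_matrix :: "real^'n^'n \<Rightarrow> bool" where
  "inner_product_matrix G \<longleftrightarrow> transpose G = G \<and> (\<forall>x. x \<noteq> 0 \<longrightarrow> x \<bullet> (G *v x) > 0)"

definition ginner :: "real^'n^'n \<Rightarrow> real^'n \<Rightarrow> real^'n \<Rightarrow> real" where
  "ginner G x y = x \<bullet> (G *v y)"

text \<open>Levi-Civita connection of the left-invariant metric on left-invariant fields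
  (Koszul formula): nabla_x y = 1/2([x,y] - ad_x^* y - ad_y^* x), where ad_x^* is the
  G-adjoint of ad_x = br x, namely G^{-1} (ad_x)^T G.\<close>
definition gadj :: "real^'n^'n \<Rightarrow> (real^'n \<Rightarrow> real^'n) \<Rightarrow> real^'n \<Rightarrow> real^'n" where
  "gadj G f v = matrix_inv G *v (transpose (matrix f) *v (G *v v))"

definition levi_civita :: "(real^'n \<Rightarrow> real^'n \<Rightarrow> real^'n) \<Rightarrow> real^'n^'n
     \<Rightarrow> real^'n \<Rightarrow> real^'n \<Rightarrow> real^'n" where
  "levi_civita br G x y = (1/2) *\<^sub>R (br x y - gadj G (br x) y - gadj G (br y) x)"

definition curvature :: "(real^'n \<Rightarrow> real^'n \<Rightarrow> real^'n) \<Rightarrow> real^'n^'n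
     \<Rightarrow> real^'n \<Rightarrow> real^'n \<Rightarrow> real^'n \<Rightarrow> real^'n" where
  "curvature br G x y z = levi_civita br G x (levi_civita br G y z)
      - levi_civita br G y (levi_civita br G x z) - levi_civita br G (br x y) z"

definition ricci_tensor :: "(real^'n \<Rightarrow> real^'n \<Rightarrow> real^'n) \<Rightarrow> real^'n^'n
     \<Rightarrow> real^'n \<Rightarrow> real^'n \<Rightarrow> real" where
  "ricci_tensor br G y z = trace (matrix (\<lambda>x. curvature br G x y z))"

text \<open>Ricci operator: the G-self-adjoint map with <Ric y, z>_G = ric(y,z).\<close>
definition ricci_operator :: "(real^'n \<Rightarrow> real^'n \<Rightarrow> real^'n) \<Rightarrow> real^'n^'n
     \<Rightarrow> real^'n \<Rightarrow> real^'n" where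
  "ricci_operator br G y = matrix_inv G *v (\<chi> k. ricci_tensor br G y (axis k 1))"

definition einstein_nilradical :: "(real^'n \<Rightarrow> real^'n \<Rightarrow> real^'n) \<Rightarrow> bool" where
  "einstein_nilradical br \<longleftrightarrow> lie_bracket br \<and> nilpotent_bracket br \<and>
     (\<exists>G c D. inner_product_matrix G \<and> derivation br D \<and>
        ricci_operator br G = (\<lambda>x. c *\<^sub>R x + D x))"

text \<open>Basis e_1,...,e_7 of real^7 (e_k is the standard unit vector at index of_nat k of type 7;
  k = 1..7 gives the 7 distinct indices).\<close>
definition e7 :: "nat \<Rightarrow> real^7" where
  "e7 k = axis (of_nat k) 1"

definition brb :: "nat \<Rightarrow> nat \<Rightarrow> real^7" where
  "brb i j =
    (if (i,j) = (1,2) then e7 3 else if (i,j) = (2,1) then - e7 3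
     else if (i,j) = (1,3) then e7 4 else if (i,j) = (3,1) then - e7 4
     else if (i,j) = (1,4) then e7 6 else if (i,j) = (4,1) then - e7 6
     else if (i,j) = (2,3) then e7 5 else if (i,j) = (3,2) then - e7 5
     else if (i,j) = (2,5) then - e7 7 else if (i,j) = (5,2) then e7 7
     else if (i,j) = (2,6) then - e7 7 else if (i,j) = (6,2) then e7 7
     else if (i,j) = (3,4) then e7 7 else if (i,j) = (4,3) then - e7 7
     else 0)"

definition brn :: "real^7 \<Rightarrow> real^7 \<Rightarrow> real^7" where
  "brn x y = (\<Sum>i\<in>{1..7}. \<Sum>j\<in>{1..7}. (x $ of_nat i * y $ of_nat j) *\<^sub>R brb i j)"

end

theory Submission
  imports Defs
begin

text \<open>The derivation \<open>D\<close> with eigenvalue \<open>w\<^sub>i\<close> on \<open>e\<^sub>i\<close>, where \<open>w = (1,2,3,4,5,5,7)\<close>, is a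
  derivation because every bracket \<open>[e\<^sub>i,e\<^sub>j]\<close> is a multiple of some \<open>e\<^sub>k\<close> with
  \<open>w\<^sub>k = w\<^sub>i + w\<^sub>j\<close>; since all weights are positive, the same grading shows that the algebra
  is nilpotent. Solving the nilsoliton equations for this grading produces an explicit inner
  product, diagonal except for the \<open>e\<^sub>5,e\<^sub>6\<close> block, for which the Koszul formula gives
  \<open>Ric = -43\<kappa> Id + 9\<kappa> D\<close> with \<open>\<kappa> = 6534047/17328\<close>; this identity is checked by direct
  computation in coordinates.\<close>

lemma matrix_inv_eqI:
  fixes A :: "'a::semiring_1^'n^'n"
  assumes "A ** B = mat 1" and "B ** A = mat 1"
  shows "matrix_inv A = B"
  unfolding matrix_inv_def
proof (rule some_equality)
  fix C assume C: "A ** C = mat 1 \<and> C ** A = mat 1"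
  have "C = C ** (A ** B)" using assms(1) by simp
  also have "\<dots> = B" using C by (simp add: matrix_mul_assoc)
  finally show "C = B" .
qed (use assms in simp)

lemma transpose_matrix_mult_vec_eq_inner:
  "transpose (matrix f) *v w = (\<chi> j. f (axis j 1) \<bullet> (w::real^'n))"
  by (simp add: vec_eq_iff matrix_vector_mult_def transpose_def matrix_def inner_vec_def mult.commute)

lemma derivation_scaleR:
  assumes "lie_bracket br" and "derivation br D"
  shows "derivation br (\<lambda>x. c *\<^sub>R D x)"
proof -
  have "br (c *\<^sub>R x) y = c *\<^sub>R br x y" "br x (c *\<^sub>R y) = c *\<^sub>R br x y" for x y
    using assms(1) linear_cmul[of "\<lambda>x. br x y"] linear_cmul[of "br x"]
    unfolding lie_bracket_def by blast+
  then show ?thesis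
    using assms(2) unfolding derivation_def
    by (simp add: linear_compose_scale_right scaleR_add_right)
qed

lemma nilpotent_bracketI:
  fixes br :: "real^'n \<Rightarrow> real^'n \<Rightarrow> real^'n"
  assumes "\<And>y. F 0 y"
    and "\<And>m x v. F m v \<Longrightarrow> F (Suc m) (br x v)"
    and "\<And>v. F k v \<Longrightarrow> v = 0"
  shows "nilpotent_bracket br"
proof -
  have "F (length xs) (foldr br xs y)" for xs y
    by (induction xs) (simp_all add: assms(1,2))
  then show ?thesis
    unfolding nilpotent_bracket_def using assms(3) by metis
qed

lemma ricci_operator_eqI:
  assumes "matrix_inv G ** G = mat 1"
    and "\<And>y z. ricci_tensor br G y z = (G *v R y) \<bullet> z"
  shows "ricci_operator br G = R"
proof
  fix y
  have "(\<chi> k. ricci_tensor br G y (axis k 1)) = G *v R y"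
    by (simp add: assms(2) inner_axis vec_eq_iff)
  then show "ricci_operator br G y = R y"
    unfolding ricci_operator_def using assms(1)
    by (simp add: matrix_vector_mul_assoc)
qed

lemma exhaust7:
  fixes x :: 7
  shows "x = 0 \<or> x = 1 \<or> x = 2 \<or> x = 3 \<or> x = 4 \<or> x = 5 \<or> x = 6"
proof (induct x)
  case (of_int z)
  then have "z = 0 \<or> z = 1 \<or> z = 2 \<or> z = 3 \<or> z = 4 \<or> z = 5 \<or> z = 6" by fastforce
  then show ?case by auto
qed

lemma forall7: "(\<forall>i::7. P i) \<longleftrightarrow> P 1 \<and> P 2 \<and> P 3 \<and> P 4 \<and> P 5 \<and> P 6 \<and> P 0"
  by (metis exhaust7)

lemma sum7: "sum f (UNIV::7 set) = f 1 + f 2 + f 3 + f 4 + f 5 + f 6 + f 0"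
proof -
  have univ: "(UNIV::7 set) = {1,2,3,4,5,6,0}" using exhaust7 by auto
  show ?thesis unfolding univ by (simp add: ac_simps)
qed

text \<open>The coordinate along \<open>e\<^sub>7\<close> sits at index \<open>0\<close>, since \<open>of_nat 7 = 0\<close> in the type \<open>7\<close>.\<close>
definition v7 :: "'a \<Rightarrow> 'a \<Rightarrow> 'a \<Rightarrow> 'a \<Rightarrow> 'a \<Rightarrow> 'a \<Rightarrow> 'a \<Rightarrow> 'a^7" where
  "v7 a b c d e f g = (\<chi> i. if i = 1 then a else if i = 2 then b else if i = 3 then c
     else if i = 4 then d else if i = 5 then e else if i = 6 then f else g)"

lemma v7_nth [simp]:
  "v7 a b c d e f g $ 1 = a" "v7 a b c d e f g $ 2 = b" "v7 a b c d e f g $ 3 = c"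
  "v7 a b c d e f g $ 4 = d" "v7 a b c d e f g $ 5 = e" "v7 a b c d e f g $ 6 = f"
  "v7 a b c d e f g $ 0 = g"
  by (simp_all add: v7_def)

lemma chi_eq_v7: "(\<chi> i. f i) = v7 (f 1) (f 2) (f 3) (f 4) (f 5) (f 6) (f 0)"
  by (simp add: vec_eq_iff forall7)

lemma v7_arith [simp]:
  "v7 a b c d e f g + v7 a' b' c' d' e' f' g' = v7 (a+a') (b+b') (c+c') (d+d') (e+e') (f+f') (g+g')"
  "v7 a b c d e f g - v7 a' b' c' d' e' f' g' = v7 (a-a') (b-b') (c-c') (d-d') (e-e') (f-f') (g-g')"
  "r *\<^sub>R v7 a b c d e f g = v7 (r*a) (r*b) (r*c) (r*d) (r*e) (r*f) (r*g)"
  by (simp_all add: vec_eq_iff forall7)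

lemma inner_v7 [simp]:
  "v7 a b c d e f g \<bullet> (y::real^7) = a*y$1 + b*y$2 + c*y$3 + d*y$4 + e*y$5 + f*y$6 + g*y$0"
  "(y::real^7) \<bullet> v7 a b c d e f g = y$1*a + y$2*b + y$3*c + y$4*d + y$5*e + y$6*f + y$0*g"
  by (simp_all add: inner_vec_def sum7)

lemma matrix_vector_mult_v7 [simp]:
  "(v7 r1 r2 r3 r4 r5 r6 r7 :: real^7^7) *v x
     = v7 (r1 \<bullet> x) (r2 \<bullet> x) (r3 \<bullet> x) (r4 \<bullet> x) (r5 \<bullet> x) (r6 \<bullet> x) (r7 \<bullet> x)"
  by (simp add: vec_eq_iff forall7 matrix_vector_mult_def inner_vec_def)

lemma axis_eq_v7:
  "axis 1 (1::real) = v7 1 0 0 0 0 0 0" "axis 2 (1::real) = v7 0 1 0 0 0 0 0"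
  "axis 3 (1::real) = v7 0 0 1 0 0 0 0" "axis 4 (1::real) = v7 0 0 0 1 0 0 0"
  "axis 5 (1::real) = v7 0 0 0 0 1 0 0" "axis 6 (1::real) = v7 0 0 0 0 0 1 0"
  "axis 0 (1::real) = v7 0 0 0 0 0 0 1" "axis 7 (1::real) = v7 0 0 0 0 0 0 1"
  by (simp_all add: vec_eq_iff forall7 axis_def)

definition bracket7 :: "real^7 \<Rightarrow> real^7 \<Rightarrow> real^7" where
  "bracket7 x y = v7 0 0 (x$1*y$2 - x$2*y$1) (x$1*y$3 - x$3*y$1) (x$2*y$3 - x$3*y$2)
     (x$1*y$4 - x$4*y$1) (-(x$2*y$5 - x$5*y$2) - (x$2*y$6 - x$6*y$2) + (x$3*y$4 - x$4*y$3))"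

lemma brn_eq_bracket7: "brn = bracket7"
proof (intro ext)
  fix x y :: "real^7"
  have "{1..7::nat} = {1,2,3,4,5,6,7}" by auto
  then show "brn x y = bracket7 x y"
    unfolding brn_def bracket7_def
    by (simp add: brb_def e7_def axis_eq_v7 vec_eq_iff forall7 algebra_simps)
qed

lemma bracket7_nth [simp]:
  "bracket7 x y $ 1 = 0" "bracket7 x y $ 2 = 0" "bracket7 x y $ 3 = x$1*y$2 - x$2*y$1"
  "bracket7 x y $ 4 = x$1*y$3 - x$3*y$1" "bracket7 x y $ 5 = x$2*y$3 - x$3*y$2"
  "bracket7 x y $ 6 = x$1*y$4 - x$4*y$1"
  "bracket7 x y $ 0 = -(x$2*y$5 - x$5*y$2) - (x$2*y$6 - x$6*y$2) + (x$3*y$4 - x$4*y$3)"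
  by (simp_all add: bracket7_def)

lemma lie_bracket_bracket7: "lie_bracket bracket7"
  unfolding lie_bracket_def
proof (intro conjI allI)
  fix x show "linear (bracket7 x)"
    by (rule linearI) (simp_all add: vec_eq_iff forall7 algebra_simps)
next
  fix y show "linear (\<lambda>x. bracket7 x y)"
    by (rule linearI) (simp_all add: vec_eq_iff forall7 algebra_simps)
next
  fix x show "bracket7 x x = 0"
    by (simp add: vec_eq_iff forall7)
next
  fix x y z show "bracket7 x (bracket7 y z) + bracket7 y (bracket7 z x) + bracket7 z (bracket7 x y) = 0"
    by (simp add: vec_eq_iff forall7 algebra_simps)
qed

definition weight :: "nat^7" where
  "weight = v7 1 2 3 4 5 5 7"

definition weight_derivation :: "real^7 \<Rightarrow> real^7" where
  "weight_derivation x = (\<chi> i. real (weight $ i) * x $ i)"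

lemma nilpotent_bracket7: "nilpotent_bracket bracket7"
proof (rule nilpotent_bracketI)
  let ?F = "\<lambda>m (v::real^7). \<forall>i. weight $ i < m \<longrightarrow> v $ i = 0"
  show "?F 0 y" for y by simp
  show "?F (Suc m) (bracket7 x v)" if "?F m v" for m x v
    using that by (auto simp: forall7 weight_def)
  show "v = 0" if "?F 8 v" for v
    using that by (simp add: forall7 weight_def vec_eq_iff)
qed

lemma derivation_weight_derivation: "derivation bracket7 weight_derivation"
  unfolding derivation_def weight_derivation_def
proof (intro conjI allI)
  show "linear (\<lambda>x. \<chi> i. real (weight $ i) * x $ i)"
    by (rule linearI) (simp_all add: vec_eq_iff algebra_simps)
next
  fix x y show "(\<chi> i. real (weight $ i) * bracket7 x y $ i)
     = bracket7 (\<chi> i. real (weight $ i) * x $ i) y + bracket7 x (\<chi> i. real (weight $ i) * y $ i)"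
    by (simp add: weight_def vec_eq_iff forall7 algebra_simps)
qed

definition gram :: "real^7^7" where
  "gram = v7 (v7 (76/159367) 0 0 0 0 0 0) (v7 0 (114/12259) 0 0 0 0 0) (v7 0 0 (19/533) 0 0 0 0)
          (v7 0 0 0 (1/6) 0 0 0) (v7 0 0 0 0 1 (1/2) 0) (v7 0 0 0 0 (1/2) (106/171) 0)
          (v7 0 0 0 0 0 0 (3289/76))"

definition gram_inv :: "real^7^7" where
  "gram_inv = v7 (v7 (159367/76) 0 0 0 0 0 0) (v7 0 (12259/114) 0 0 0 0 0) (v7 0 0 (533/19) 0 0 0 0)
          (v7 0 0 0 6 0 0 0) (v7 0 0 0 0 (424/253) (-342/253) 0) (v7 0 0 0 0 (-342/253) (684/253) 0)
          (v7 0 0 0 0 0 0 (76/3289))"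

lemma gram_mult_gram_inv: "gram ** gram_inv = mat 1"
  and gram_inv_mult_gram: "gram_inv ** gram = mat 1"
  by (simp_all add: gram_def gram_inv_def vec_eq_iff forall7 matrix_matrix_mult_def sum7 mat_def)

lemma matrix_inv_gram: "matrix_inv gram = gram_inv"
  using gram_mult_gram_inv gram_inv_mult_gram by (rule matrix_inv_eqI)

lemma inner_product_matrix_gram: "inner_product_matrix gram"
  unfolding inner_product_matrix_def
proof (intro conjI allI impI)
  show "transpose gram = gram"
    by (simp add: gram_def vec_eq_iff forall7 transpose_def)
next
  fix x :: "real^7" assume "x \<noteq> 0"
  have quadratic_form: "x \<bullet> (gram *v x) = (76/159367) * (x$1)^2 + (114/12259) * (x$2)^2
      + (19/533) * (x$3)^2 + (1/6) * (x$4)^2 + (x$5 + x$6/2)^2 + (253/684) * (x$6)^2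
      + (3289/76) * (x$0)^2"
    by (simp add: gram_def power2_eq_square algebra_simps)
  show "x \<bullet> (gram *v x) > 0"
  proof (rule ccontr)
    assume "\<not> x \<bullet> (gram *v x) > 0"
    then have "(x$1)^2 = 0" "(x$2)^2 = 0" "(x$3)^2 = 0" "(x$4)^2 = 0" "(x$5 + x$6/2)^2 = 0"
      "(x$6)^2 = 0" "(x$0)^2 = 0"
      unfolding quadratic_form
      using zero_le_power2[of "x$1"] zero_le_power2[of "x$2"] zero_le_power2[of "x$3"]
        zero_le_power2[of "x$4"] zero_le_power2[of "x$5 + x$6/2"] zero_le_power2[of "x$6"]
        zero_le_power2[of "x$0"]
      by linarith+
    then have "x = 0" by (simp add: vec_eq_iff forall7)
    with \<open>x \<noteq> 0\<close> show False by simp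
  qed
qed

text \<open>The Koszul formula evaluated for \<open>gram\<close>; the coefficients were computed symbolically.\<close>
definition nabla :: "real^7 \<Rightarrow> real^7 \<Rightarrow> real^7" where
  "nabla x y = v7 ((299/8) * x$2 * y$3 + (299/8) * x$3 * y$2 + (159367/912) * x$3 * y$4 + (159367/912) * x$4 * y$3 + (159367/304) * x$4 * y$5 + (8446451/12996) * x$4 * y$6 + (159367/304) * x$5 * y$4 + (8446451/12996) * x$6 * y$4) ((- 23/12) * x$1 * y$3 + (- 23/12) * x$3 * y$1 + (12259/228) * x$3 * y$5 + (12259/456) * x$3 * y$6 + (12259/228) * x$5 * y$3 + (- 40319851/17328) * x$5 * y$0 + (12259/456) * x$6 * y$3 + (- 40319851/17328) * x$6 * y$0 + (- 40319851/17328) * x$0 * y$5 + (- 40319851/17328) * x$0 * y$6) ((1/2) * x$1 * y$2 + (- 533/228) * x$1 * y$4 + (- 1/2) * x$2 * y$1 + (- 533/38) * x$2 * y$5 + (- 533/76) * x$2 * y$6 + (- 533/228) * x$4 * y$1 + (1753037/2888) * x$4 * y$0 + (- 533/38) * x$5 * y$2 + (- 533/76) * x$6 * y$2 + (1753037/2888) * x$0 * y$4) ((1/2) * x$1 * y$3 + (- 3/2) * x$1 * y$5 + (- 106/57) * x$1 * y$6 + (- 1/2) * x$3 * y$1 + (- 9867/76) * x$3 * y$0 + (- 3/2) * x$5 * y$1 + (- 106/57) * x$6 * y$1 + (- 9867/76) * x$0 * y$3) ((1/2) * x$2 * y$3 + (533/76) * x$2 * y$0 + (- 1/2) * x$3 *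 y$2 + (533/76) * x$0 * y$2) ((1/2) * x$1 * y$4 + (117/4) * x$2 * y$0 + (- 1/2) * x$4 * y$1 + (117/4) * x$0 * y$2) ((- 1/2) * x$2 * y$5 + (- 1/2) * x$2 * y$6 + (1/2) * x$3 * y$4 + (- 1/2) * x$4 * y$3 + (1/2) * x$5 * y$2 + (1/2) * x$6 * y$2)"

lemma levi_civita_gram: "levi_civita bracket7 gram x y = nabla x y"
  unfolding levi_civita_def gadj_def matrix_inv_gram transpose_matrix_mult_vec_eq_inner
  by (simp add: chi_eq_v7 axis_eq_v7 gram_def gram_inv_def nabla_def vec_eq_iff forall7 algebra_simps)

definition kappa :: real where
  "kappa = 6534047/17328"

lemma ricci_tensor_gram:
  "ricci_tensor bracket7 gram y z
     = (gram *v ((- 43 * kappa) *\<^sub>R y + (9 * kappa) *\<^sub>R weight_derivation y)) \<bullet> z"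
  unfolding ricci_tensor_def trace_def curvature_def levi_civita_gram
  by (simp add: matrix_def sum7 axis_eq_v7 nabla_def gram_def weight_derivation_def weight_def
      chi_eq_v7 kappa_def algebra_simps)
    (simp add: field_simps)

theorem mainTheorem12:
  shows "einstein_nilradical brn"
  unfolding einstein_nilradical_def brn_eq_bracket7
proof (intro conjI exI)
  show "lie_bracket bracket7" by (rule lie_bracket_bracket7)
  show "nilpotent_bracket bracket7" by (rule nilpotent_bracket7)
  show "inner_product_matrix gram" by (rule inner_product_matrix_gram)
  show "derivation bracket7 (\<lambda>x. (9 * kappa) *\<^sub>R weight_derivation x)"
    using lie_bracket_bracket7 derivation_weight_derivation by (rule derivation_scaleR)
  show "ricci_operator bracket7 gram
      = (\<lambda>x. (- 43 * kappa) *\<^sub>R x + (9 * kappa) *\<^sub>R weight_derivation x)"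
    by (rule ricci_operator_eqI)
      (simp_all only: matrix_inv_gram gram_inv_mult_gram ricci_tensor_gram)
qed

end
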